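(* The universal abstract regular polytope $\mathcal{Q}=\{\{4,3\}_3,\{3,4\}_3\}$, with hemicubes as facets and hemi-octahedra as vertex figures, has no proper quotients: every polytope $\mathcal{R}$ admitting a covering $\mathcal{Q}\to\mathcal{R}$ is isomorphic to $\mathcal{Q}$.
   Context: The universal polytope $\{\mathcal{K},\mathcal{L}\}$ is the regular rank-4 abstract polytope with facets $\mathcal{K}$ and vertex figures $\mathcal{L}$ covering every regular polytope with these facets and vertex figures. $\{4,3\}_3=\{4,3\}/2$ is the hemicube and $\{3,4\}_3=\{3,4\}/2$ the hemi-octahedron (quotients of the cube and octahedron by their central inversion). A covering is a rank- and order-preserving surjection between polytopes mapping flags onto flags and preserving adjacency of flags; a quotient of $\mathcal{Q}$ is the image of such a covering, and a proper quotient is one not isomorphic to $\mathcal{Q}$. *)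

theory Defs
  imports Main
begin

record 'a face_poset =
  pfaces :: "'a set"
  pleq :: "'a \<Rightarrow> 'a \<Rightarrow> bool"

definition plt :: "'a face_poset \<Rightarrow> 'a \<Rightarrow> 'a \<Rightarrow> bool" where
  "plt P x y \<longleftrightarrow> pleq P x y \<and> x \<noteq> y"

definition is_poset :: "'a face_poset \<Rightarrow> bool" where
  "is_poset P \<longleftrightarrow>
     (\<forall>x\<in>pfaces P. pleq P x x) \<and>
     (\<forall>x\<in>pfaces P. \<forall>y\<in>pfaces P. pleq P x y \<and> pleq P y x \<longrightarrow> x = y) \<and>
     (\<forall>x\<in>pfaces P. \<forall>y\<in>pfaces P. \<forall>z\<in>pfaces P. pleq P x y \<and> pleq P y z \<longrightarrow> pleq P x z)"

definition is_chain :: "'a face_poset \<Rightarrow> 'a set \<Rightarrow> bool" where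
  "is_chain P C \<longleftrightarrow> C \<subseteq> pfaces P \<and> (\<forall>x\<in>C. \<forall>y\<in>C. pleq P x y \<or> pleq P y x)"

definition is_flag :: "'a face_poset \<Rightarrow> 'a set \<Rightarrow> bool" where
  "is_flag P \<Phi> \<longleftrightarrow> is_chain P \<Phi> \<and> (\<forall>C. is_chain P C \<and> \<Phi> \<subseteq> C \<longrightarrow> C = \<Phi>)"

definition flags_adjacent :: "'a set \<Rightarrow> 'a set \<Rightarrow> bool" where
  "flags_adjacent \<Phi> \<Psi> \<longleftrightarrow> finite \<Phi> \<and> finite \<Psi> \<and> card \<Phi> = card \<Psi> \<and> card (\<Phi> - \<Psi>) = 1"

text \<open>Rank of a face: number of faces strictly below it in a flag through it, minus one
  (well defined in an abstract polytope).\<close>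
definition face_rank :: "'a face_poset \<Rightarrow> 'a \<Rightarrow> int" where
  "face_rank P x = int (card {y \<in> (SOME \<Phi>. is_flag P \<Phi> \<and> x \<in> \<Phi>). plt P y x}) - 1"

definition is_least :: "'a face_poset \<Rightarrow> 'a \<Rightarrow> bool" where
  "is_least P x \<longleftrightarrow> x \<in> pfaces P \<and> (\<forall>y\<in>pfaces P. pleq P x y)"

definition is_greatest :: "'a face_poset \<Rightarrow> 'a \<Rightarrow> bool" where
  "is_greatest P x \<longleftrightarrow> x \<in> pfaces P \<and> (\<forall>y\<in>pfaces P. pleq P y x)"

definition strongly_flag_connected :: "'a face_poset \<Rightarrow> bool" where
  "strongly_flag_connected P \<longleftrightarrow>
     (\<forall>\<Phi> \<Psi>. is_flag P \<Phi> \<and> is_flag P \<Psi> \<longrightarrow>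
        (\<exists>fs. fs \<noteq> [] \<and> hd fs = \<Phi> \<and> last fs = \<Psi> \<and>
              (\<forall>\<Lambda>\<in>set fs. is_flag P \<Lambda> \<and> \<Phi> \<inter> \<Psi> \<subseteq> \<Lambda>) \<and>
              (\<forall>i. Suc i < length fs \<longrightarrow> flags_adjacent (fs ! i) (fs ! Suc i))))"

definition diamond_condition :: "'a face_poset \<Rightarrow> bool" where
  "diamond_condition P \<longleftrightarrow>
     (\<forall>x\<in>pfaces P. \<forall>y\<in>pfaces P. plt P x y \<and> face_rank P y = face_rank P x + 2 \<longrightarrow>
        card {z \<in> pfaces P. plt P x z \<and> plt P z y} = 2)"

definition is_polytope :: "'a face_poset \<Rightarrow> nat \<Rightarrow> bool" where
  "is_polytope P n \<longleftrightarrow>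
     is_poset P \<and>
     (\<exists>x. is_least P x) \<and> (\<exists>x. is_greatest P x) \<and>
     (\<forall>\<Phi>. is_flag P \<Phi> \<longrightarrow> finite \<Phi> \<and> card \<Phi> = n + 2) \<and>
     strongly_flag_connected P \<and>
     diamond_condition P"

definition section_of :: "'a face_poset \<Rightarrow> 'a \<Rightarrow> 'a \<Rightarrow> 'a face_poset" where
  "section_of P x y = \<lparr> pfaces = {z \<in> pfaces P. pleq P x z \<and> pleq P z y}, pleq = pleq P \<rparr>"

definition poset_iso :: "'a face_poset \<Rightarrow> 'b face_poset \<Rightarrow> bool" where
  "poset_iso P Q \<longleftrightarrow> (\<exists>f. bij_betw f (pfaces P) (pfaces Q) \<and>
      (\<forall>x\<in>pfaces P. \<forall>y\<in>pfaces P. pleq P x y \<longleftrightarrow> pleq Q (f x) (f y)))"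

definition is_regular :: "'a face_poset \<Rightarrow> bool" where
  "is_regular P \<longleftrightarrow>
     (\<forall>\<Phi> \<Psi>. is_flag P \<Phi> \<and> is_flag P \<Psi> \<longrightarrow>
        (\<exists>f. bij_betw f (pfaces P) (pfaces P) \<and>
             (\<forall>x\<in>pfaces P. \<forall>y\<in>pfaces P. pleq P x y \<longleftrightarrow> pleq P (f x) (f y)) \<and>
             f ` \<Phi> = \<Psi>))"

definition facets_iso :: "'a face_poset \<Rightarrow> nat \<Rightarrow> 'b face_poset \<Rightarrow> bool" where
  "facets_iso P n K \<longleftrightarrow>
     (\<forall>x y. is_least P x \<and> y \<in> pfaces P \<and> face_rank P y = int n - 1 \<longrightarrow>
        poset_iso (section_of P x y) K)"

definition vertex_figures_iso :: "'a face_poset \<Rightarrow> 'b face_poset \<Rightarrow> bool" where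
  "vertex_figures_iso P L \<longleftrightarrow>
     (\<forall>x y. x \<in> pfaces P \<and> face_rank P x = 0 \<and> is_greatest P y \<longrightarrow>
        poset_iso (section_of P x y) L)"

definition is_covering :: "'a face_poset \<Rightarrow> 'b face_poset \<Rightarrow> ('a \<Rightarrow> 'b) \<Rightarrow> bool" where
  "is_covering P R g \<longleftrightarrow>
     g ` pfaces P = pfaces R \<and>
     (\<forall>x\<in>pfaces P. face_rank R (g x) = face_rank P x) \<and>
     (\<forall>x\<in>pfaces P. \<forall>y\<in>pfaces P. pleq P x y \<longrightarrow> pleq R (g x) (g y)) \<and>
     (\<forall>\<Phi>. is_flag P \<Phi> \<longrightarrow> is_flag R (g ` \<Phi>)) \<and>
     (\<forall>\<Psi>. is_flag R \<Psi> \<longrightarrow> (\<exists>\<Phi>. is_flag P \<Phi> \<and> g ` \<Phi> = \<Psi>)) \<and>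
     (\<forall>\<Phi> \<Psi>. is_flag P \<Phi> \<and> is_flag P \<Psi> \<and> flags_adjacent \<Phi> \<Psi> \<longrightarrow>
        flags_adjacent (g ` \<Phi>) (g ` \<Psi>))"

text \<open>Such polytopes are countable (flag-connected, locally finite flag graph), so
  quantifying over polytopes with faces in nat loses no generality.\<close>
definition is_universal_KL :: "'a face_poset \<Rightarrow> 'b face_poset \<Rightarrow> 'c face_poset \<Rightarrow> bool" where
  "is_universal_KL P K L \<longleftrightarrow>
     is_polytope P 4 \<and> is_regular P \<and> facets_iso P 4 K \<and> vertex_figures_iso P L \<and>
     (\<forall>R :: nat face_poset. is_polytope R 4 \<and> is_regular R \<and> facets_iso R 4 K \<and>
          vertex_figures_iso R L \<longrightarrow> (\<exists>g. is_covering P R g))"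

text \<open>Faces of the cube [-1,1]^3: None is the empty face; Some v with v in {-1,0,1}^3
  is the face where coordinates with v_i = 0 are free and others fixed to v_i.\<close>
type_synonym cface = "(int \<times> int \<times> int) option"

definition cube_faces :: "cface set" where
  "cube_faces = insert None
     (Some ` {(a, b, c). a \<in> {-1, 0, 1} \<and> b \<in> {-1, 0, 1} \<and> c \<in> {-1, 0, 1}})"

fun cube_le :: "cface \<Rightarrow> cface \<Rightarrow> bool" where
  "cube_le None _ = True"
| "cube_le (Some _) None = False"
| "cube_le (Some (a, b, c)) (Some (a', b', c')) \<longleftrightarrow>
     (a' = 0 \<or> a' = a) \<and> (b' = 0 \<or> b' = b) \<and> (c' = 0 \<or> c' = c)"

definition cube :: "cface face_poset" where
  "cube = \<lparr> pfaces = cube_faces, pleq = cube_le \<rparr>"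

fun cube_inv :: "cface \<Rightarrow> cface" where
  "cube_inv None = None"
| "cube_inv (Some (a, b, c)) = Some (-a, -b, -c)"

text \<open>Hemicube {4,3}_3 = cube / central inversion: faces are orbits {F, -F}.\<close>
definition hemicube :: "cface set face_poset" where
  "hemicube = \<lparr> pfaces = (\<lambda>F. {F, cube_inv F}) ` cube_faces,
                pleq = (\<lambda>A B. \<exists>a\<in>A. \<exists>b\<in>B. cube_le a b) \<rparr>"

definition hemioctahedron :: "cface set face_poset" where
  "hemioctahedron = \<lparr> pfaces = pfaces hemicube, pleq = (\<lambda>A B. pleq hemicube B A) \<rparr>"

end

theory Submission
  imports Defs
begin

text \<open>
  Let g be a covering of Q onto R. Each facet of Q, a hemicube, has four vertices, any two of
  them joined by an edge; each vertex figure, a hemi-octahedron, has three atoms, any two of them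
  in a common 2-face. So a vertex has at most three neighbours, the vertices of a facet through
  v are exactly v and its neighbours, and by flag connectivity every vertex lies in every
  facet: any two vertices of Q are joined by an edge. Two faces forming the middle of a diamond
  are exchanged by passing to an adjacent flag, and g maps adjacent flags to adjacent flags, so
  g separates them. This makes g injective on vertices (diamonds over the least face) and on
  edges through a common vertex (diamonds over that vertex); disjoint edges cannot be
  identified either, since their four vertices would have distinct images below one edge of R.
  The type is self-dual, so the dual argument handles 2-faces and facets. An injective covering
  is an isomorphism.
\<close>

section \<open>Posets, flags and coverings\<close>

lemma poset_refl: "is_poset P \<Longrightarrow> x \<in> pfaces P \<Longrightarrow> pleq P x x"
  by (simp add: is_poset_def)

lemma poset_antisym:
  "is_poset P \<Longrightarrow> x \<in> pfaces P \<Longrightarrow> y \<in> pfaces P \<Longrightarrow> pleq P x y \<Longrightarrow> pleq P y x \<Longrightarrow> x = y"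
  unfolding is_poset_def by blast

lemma poset_trans:
  "is_poset P \<Longrightarrow> x \<in> pfaces P \<Longrightarrow> y \<in> pfaces P \<Longrightarrow> z \<in> pfaces P \<Longrightarrow>
    pleq P x y \<Longrightarrow> pleq P y z \<Longrightarrow> pleq P x z"
  unfolding is_poset_def by blast

lemma flag_subset: "is_flag P \<Phi> \<Longrightarrow> \<Phi> \<subseteq> pfaces P"
  by (simp add: is_flag_def is_chain_def)

lemma flag_comparable: "is_flag P \<Phi> \<Longrightarrow> x \<in> \<Phi> \<Longrightarrow> y \<in> \<Phi> \<Longrightarrow> pleq P x y \<or> pleq P y x"
  by (simp add: is_flag_def is_chain_def)

lemma flag_extends_chain:
  assumes "is_chain P C"
  obtains \<Phi> where "is_flag P \<Phi>" "C \<subseteq> \<Phi>"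
proof -
  let ?A = "{D. is_chain P D \<and> C \<subseteq> D}"
  have "\<exists>M\<in>?A. \<forall>X\<in>?A. M \<subseteq> X \<longrightarrow> X = M"
  proof (rule subset_Zorn_nonempty)
    show "?A \<noteq> {}" using assms by auto
  next
    fix \<C> assume ne: "\<C> \<noteq> {}" and ch: "subset.chain ?A \<C>"
    have "pleq P x y \<or> pleq P y x" if "X \<in> \<C>" "Y \<in> \<C>" "x \<in> X" "y \<in> Y" for X Y x y
    proof -
      have "X \<subseteq> Y \<or> Y \<subseteq> X" "is_chain P X" "is_chain P Y"
        using ch that by (auto simp: subset_chain_def)
      then show ?thesis
        using that by (auto simp: is_chain_def)
    qed
    moreover have "\<Union>\<C> \<subseteq> pfaces P" "C \<subseteq> \<Union>\<C>"
      using ch ne by (fastforce simp: subset_chain_def is_chain_def)+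
    ultimately show "\<Union>\<C> \<in> ?A"
      unfolding is_chain_def by auto
  qed
  then obtain M where M: "M \<in> ?A" and max: "\<forall>X\<in>?A. M \<subseteq> X \<longrightarrow> X = M" ..
  have "is_flag P M"
    unfolding is_flag_def
  proof (intro conjI allI impI)
    show "is_chain P M" using M by simp
  next
    fix D assume "is_chain P D \<and> M \<subseteq> D"
    then show "D = M" using M max by auto
  qed
  with M show ?thesis using that by simp
qed

lemma flag_connected_induct:
  assumes "strongly_flag_connected P" "is_flag P \<Phi>" "is_flag P \<Psi>" "Q \<Phi>"
    and step: "\<And>A B. is_flag P A \<Longrightarrow> is_flag P B \<Longrightarrow> flags_adjacent A B \<Longrightarrow> Q A \<Longrightarrow> Q B"
  shows "Q \<Psi>"
proof -
  obtain fs where fs: "fs \<noteq> []" "hd fs = \<Phi>" "last fs = \<Psi>" "\<forall>\<Lambda>\<in>set fs. is_flag P \<Lambda>"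
    "\<forall>i. Suc i < length fs \<longrightarrow> flags_adjacent (fs ! i) (fs ! Suc i)"
    using assms(1)[unfolded strongly_flag_connected_def, rule_format, OF conjI[OF assms(2,3)]]
    by (elim exE conjE) simp
  have Q_fs: "Q (fs ! i)" if "i < length fs" for i
    using that
  proof (induction i)
    case 0
    then show ?case using fs(1,2) assms(4) by (simp add: hd_conv_nth)
  next
    case (Suc i)
    then show ?case using step fs(4,5) by (metis Suc_lessD nth_mem)
  qed
  have "Q (fs ! (length fs - 1))"
    by (rule Q_fs) (use fs(1) in simp)
  then show ?thesis
    using fs(1,3) by (simp add: last_conv_nth)
qed

lemma pfaces_section: "pfaces (section_of P x y) = {z \<in> pfaces P. pleq P x z \<and> pleq P z y}"
  by (simp add: section_of_def)

lemma pleq_section [simp]: "pleq (section_of P x y) = pleq P"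
  by (simp add: section_of_def)

lemma plt_section [simp]: "plt (section_of P x y) = plt P"
  by (simp add: plt_def fun_eq_iff)

lemma is_least_section:
  "is_poset P \<Longrightarrow> x \<in> pfaces P \<Longrightarrow> pleq P x y \<Longrightarrow> is_least (section_of P x y) x"
  by (simp add: is_least_def pfaces_section is_poset_def)

lemma covering_face:
  assumes "is_covering P R g" "x \<in> pfaces P"
  shows "g x \<in> pfaces R" "face_rank R (g x) = face_rank P x"
  using assms by (auto simp: is_covering_def)

lemma covering_mono:
  "is_covering P R g \<Longrightarrow> x \<in> pfaces P \<Longrightarrow> y \<in> pfaces P \<Longrightarrow> pleq P x y \<Longrightarrow> pleq R (g x) (g y)"
  by (simp add: is_covering_def)

lemma covering_lifts_flag:
  "is_covering P R g \<Longrightarrow> is_flag R \<Psi> \<Longrightarrow> \<exists>\<Phi>. is_flag P \<Phi> \<and> g ` \<Phi> = \<Psi>"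
  unfolding is_covering_def by blast

lemma covering_flags_adjacent:
  "is_covering P R g \<Longrightarrow> is_flag P \<Phi> \<Longrightarrow> is_flag P \<Psi> \<Longrightarrow> flags_adjacent \<Phi> \<Psi> \<Longrightarrow>
    flags_adjacent (g ` \<Phi>) (g ` \<Psi>)"
  unfolding is_covering_def by blast

lemma injective_covering_flag_preimage:
  assumes cov: "is_covering P R g" and inj: "inj_on g (pfaces P)" and "is_flag R \<Psi>"
  obtains \<Phi> where "is_flag P \<Phi>" "\<And>z. z \<in> pfaces P \<Longrightarrow> g z \<in> \<Psi> \<Longrightarrow> z \<in> \<Phi>"
proof -
  obtain \<Phi> where \<Phi>: "is_flag P \<Phi>" "g ` \<Phi> = \<Psi>"
    using covering_lifts_flag[OF cov \<open>is_flag R \<Psi>\<close>] by blast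
  have "z \<in> \<Phi>" if z: "z \<in> pfaces P" "g z \<in> \<Psi>" for z
  proof -
    obtain z' where "z' \<in> \<Phi>" "g z' = g z"
      using z(2) \<Phi>(2) by force
    moreover from this have "z' = z"
      using inj_onD[OF inj] flag_subset[OF \<Phi>(1)] z(1) by blast
    ultimately show ?thesis by simp
  qed
  with \<Phi>(1) show ?thesis by (rule that)
qed

lemma injective_covering_poset_iso:
  assumes P: "is_poset P" and R: "is_poset R" and cov: "is_covering P R g"
    and inj: "inj_on g (pfaces P)"
  shows "poset_iso P R"
  unfolding poset_iso_def
proof (intro exI conjI ballI)
  show "bij_betw g (pfaces P) (pfaces R)"
    using inj cov by (simp add: bij_betw_def is_covering_def)
next
  fix x y assume x: "x \<in> pfaces P" and y: "y \<in> pfaces P"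
  show "pleq P x y \<longleftrightarrow> pleq R (g x) (g y)"
  proof
    assume "pleq P x y"
    then show "pleq R (g x) (g y)" using covering_mono[OF cov x y] by simp
  next
    assume le: "pleq R (g x) (g y)"
    have gx: "g x \<in> pfaces R" and gy: "g y \<in> pfaces R"
      using covering_face[OF cov] x y by simp_all
    have "is_chain R {g x, g y}"
      using gx gy le poset_refl[OF R] by (auto simp: is_chain_def)
    then obtain \<Psi> where \<Psi>: "is_flag R \<Psi>" "{g x, g y} \<subseteq> \<Psi>"
      by (rule flag_extends_chain)
    then obtain \<Phi> where \<Phi>: "is_flag P \<Phi>" "x \<in> \<Phi>" "y \<in> \<Phi>"
      using injective_covering_flag_preimage[OF cov inj \<Psi>(1)] x y by (metis insert_subset)
    then consider "pleq P x y" | "pleq P y x"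
      using flag_comparable[OF \<Phi>] by blast
    then show "pleq P x y"
    proof cases
      case 2
      then have "g x = g y"
        using poset_antisym[OF R gx gy le] covering_mono[OF cov y x] x y by simp
      then have "x = y"
        using inj_onD[OF inj] x y by blast
      then show ?thesis
        using poset_refl[OF P x] by simp
    qed
  qed
qed

definition dual_poset :: "'a face_poset \<Rightarrow> 'a face_poset" where
  "dual_poset P = \<lparr>pfaces = pfaces P, pleq = (\<lambda>x y. pleq P y x)\<rparr>"

lemma pfaces_dual [simp]: "pfaces (dual_poset P) = pfaces P"
  by (simp add: dual_poset_def)

lemma pleq_dual [simp]: "pleq (dual_poset P) x y = pleq P y x"
  by (simp add: dual_poset_def)

lemma plt_dual [simp]: "plt (dual_poset P) x y = plt P y x"
  by (auto simp: plt_def)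

lemma is_flag_dual [simp]: "is_flag (dual_poset P) \<Phi> = is_flag P \<Phi>"
proof -
  have "is_chain (dual_poset P) = is_chain P"
    by (auto simp: is_chain_def fun_eq_iff)
  then show ?thesis by (simp add: is_flag_def)
qed

lemma is_least_dual [simp]: "is_least (dual_poset P) x = is_greatest P x"
  and is_greatest_dual [simp]: "is_greatest (dual_poset P) x = is_least P x"
  by (simp_all add: is_least_def is_greatest_def)

lemma is_poset_dual: "is_poset P \<Longrightarrow> is_poset (dual_poset P)"
  unfolding is_poset_def pfaces_dual pleq_dual by meson

lemma section_of_dual: "section_of (dual_poset P) x y = dual_poset (section_of P y x)"
  by (auto simp: section_of_def dual_poset_def)

lemma poset_iso_dual: "poset_iso S T \<Longrightarrow> poset_iso (dual_poset S) (dual_poset T)"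
  unfolding poset_iso_def pfaces_dual pleq_dual by metis

section \<open>Atoms and order isomorphisms\<close>

definition atoms :: "'a face_poset \<Rightarrow> 'a \<Rightarrow> 'a set" where
  "atoms T b = {x \<in> pfaces T. plt T b x \<and> (\<forall>z\<in>pfaces T. plt T b z \<longrightarrow> \<not> plt T z x)}"

definition spans :: "'a face_poset \<Rightarrow> 'a \<Rightarrow> 'a \<Rightarrow> 'a \<Rightarrow> 'a \<Rightarrow> bool" where
  "spans T b x y c \<longleftrightarrow> c \<in> pfaces T \<and> plt T x c \<and> plt T y c \<and>
     (\<forall>z\<in>pfaces T. plt T z c \<longrightarrow> z = b \<or> z = x \<or> z = y)"

definition atoms_pairwise_spanned :: "'a face_poset \<Rightarrow> 'a \<Rightarrow> bool" where
  "atoms_pairwise_spanned T b \<longleftrightarrow>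
     (\<forall>x\<in>atoms T b. \<forall>y\<in>atoms T b. x \<noteq> y \<longrightarrow> (\<exists>c. spans T b x y c))"

lemma spans_commute: "spans T b x y c \<Longrightarrow> spans T b y x c"
  unfolding spans_def by blast

locale order_iso =
  fixes S :: "'a face_poset" and T :: "'b face_poset" and h :: "'a \<Rightarrow> 'b"
  assumes bij: "bij_betw h (pfaces S) (pfaces T)"
    and pleq_iff: "x \<in> pfaces S \<Longrightarrow> y \<in> pfaces S \<Longrightarrow> pleq T (h x) (h y) \<longleftrightarrow> pleq S x y"
begin

lemma image_faces: "h ` pfaces S = pfaces T"
  using bij by (simp add: bij_betw_def)

lemma inj: "x \<in> pfaces S \<Longrightarrow> y \<in> pfaces S \<Longrightarrow> h x = h y \<Longrightarrow> x = y"
  using bij by (auto simp: bij_betw_def dest: inj_onD)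

lemma ball_faces: "(\<forall>z\<in>pfaces T. Q z) \<longleftrightarrow> (\<forall>x\<in>pfaces S. Q (h x))"
  by (simp flip: image_faces)

lemma plt_iff: "x \<in> pfaces S \<Longrightarrow> y \<in> pfaces S \<Longrightarrow> plt T (h x) (h y) \<longleftrightarrow> plt S x y"
  using pleq_iff inj unfolding plt_def by blast

lemma is_least_image: "is_least S b \<Longrightarrow> is_least T (h b)"
  using image_faces pleq_iff by (auto simp: is_least_def ball_faces)

lemma atoms_image:
  assumes b: "b \<in> pfaces S"
  shows "atoms T (h b) = h ` atoms S b"
proof -
  have iff: "h x \<in> atoms T (h b) \<longleftrightarrow> x \<in> atoms S b" if "x \<in> pfaces S" for x
    using that b image_faces plt_iff by (auto simp: atoms_def ball_faces)
  have sub: "atoms T (h b) \<subseteq> h ` pfaces S" "atoms S b \<subseteq> pfaces S"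
    using image_faces by (auto simp: atoms_def)
  show ?thesis
  proof (intro set_eqI iffI)
    fix y assume y: "y \<in> atoms T (h b)"
    then obtain x where "x \<in> pfaces S" "y = h x"
      using sub(1) by blast
    then show "y \<in> h ` atoms S b"
      using iff y by blast
  next
    fix y assume "y \<in> h ` atoms S b"
    then obtain x where "x \<in> atoms S b" "y = h x"
      by blast
    then show "y \<in> atoms T (h b)"
      using iff sub(2) by blast
  qed
qed

lemma card_atoms: "b \<in> pfaces S \<Longrightarrow> card (atoms T (h b)) = card (atoms S b)"
  using atoms_image inj by (simp add: atoms_def card_image inj_on_def)

lemma atoms_pairwise_spanned_transfer:
  assumes b: "b \<in> pfaces S" and spanned: "atoms_pairwise_spanned T (h b)"
  shows "atoms_pairwise_spanned S b"
  unfolding atoms_pairwise_spanned_def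
proof (intro ballI impI)
  fix x y assume x: "x \<in> atoms S b" and y: "y \<in> atoms S b" and "x \<noteq> y"
  then have faces: "x \<in> pfaces S" "y \<in> pfaces S"
    by (auto simp: atoms_def)
  then obtain c' where "spans T (h b) (h x) (h y) c'"
    using spanned x y \<open>x \<noteq> y\<close> atoms_image[OF b] inj
    unfolding atoms_pairwise_spanned_def by (metis imageI)
  moreover obtain c where c: "c \<in> pfaces S" "c' = h c"
    using calculation image_faces by (auto simp: spans_def)
  ultimately have "spans S b x y c"
    using b faces plt_iff inj image_faces unfolding spans_def ball_faces by auto
  then show "\<exists>c. spans S b x y c" ..
qed

end

lemma poset_iso_least_atoms:
  assumes "poset_iso S T" and "is_least S b"
  obtains b' where "is_least T b'" "card (atoms S b) = card (atoms T b')"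
    "atoms_pairwise_spanned T b' \<Longrightarrow> atoms_pairwise_spanned S b"
proof -
  obtain h where "order_iso S T h"
    using assms(1) unfolding poset_iso_def order_iso_def by metis
  then interpret order_iso S T h .
  have b: "b \<in> pfaces S"
    using assms(2) by (simp add: is_least_def)
  show ?thesis
    by (rule that[OF is_least_image[OF assms(2)] card_atoms[OF b, symmetric]
          atoms_pairwise_spanned_transfer[OF b]])
qed

section \<open>The hemicube and the hemi-octahedron\<close>

definition inv_orbit :: "cface \<Rightarrow> cface set" where
  "inv_orbit F = {F, cube_inv F}"

lemma cube_inv_involution [simp]: "cube_inv (cube_inv F) = F"
  by (cases F) auto

lemma cube_le_cube_inv: "cube_le (cube_inv F) (cube_inv G) = cube_le F G"
  by (cases F; cases G) auto

lemma inv_orbit_eq_iff: "inv_orbit F = inv_orbit G \<longleftrightarrow> G = F \<or> G = cube_inv F"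
  unfolding inv_orbit_def by (auto simp: doubleton_eq_iff)

lemma ball_inv_orbit: "(\<forall>x\<in>inv_orbit ` A. Q x) \<longleftrightarrow> (\<forall>F\<in>A. Q (inv_orbit F))"
  by blast

lemma mem_cube_faces [simp]:
  "None \<in> cube_faces"
  "Some (a, b, c) \<in> cube_faces \<longleftrightarrow> a \<in> {-1, 0, 1} \<and> b \<in> {-1, 0, 1} \<and> c \<in> {-1, 0, 1}"
  by (auto simp: cube_faces_def)

lemma ball_cube_faces:
  "(\<forall>F\<in>cube_faces. Q F) \<longleftrightarrow>
     Q None \<and> (\<forall>a\<in>{-1,0,1}. \<forall>b\<in>{-1,0,1}. \<forall>c\<in>{-1,0,1::int}. Q (Some (a, b, c)))"
  unfolding cube_faces_def by blast

lemma pfaces_hemicube: "pfaces hemicube = inv_orbit ` cube_faces"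
  by (simp add: hemicube_def inv_orbit_def)

lemma pfaces_hemioctahedron: "pfaces hemioctahedron = inv_orbit ` cube_faces"
  by (simp add: hemioctahedron_def pfaces_hemicube)

lemma pleq_hemicube:
  "pleq hemicube (inv_orbit F) (inv_orbit G) \<longleftrightarrow> cube_le F G \<or> cube_le (cube_inv F) G"
  using cube_le_cube_inv[of "cube_inv F" G] by (auto simp: hemicube_def inv_orbit_def cube_le_cube_inv)

lemma pleq_hemioctahedron:
  "pleq hemioctahedron (inv_orbit F) (inv_orbit G) \<longleftrightarrow> cube_le G F \<or> cube_le (cube_inv G) F"
  by (simp add: hemioctahedron_def pleq_hemicube)

lemma plt_hemicube:
  "plt hemicube (inv_orbit F) (inv_orbit G) \<longleftrightarrow>
     (cube_le F G \<or> cube_le (cube_inv F) G) \<and> G \<noteq> F \<and> G \<noteq> cube_inv F"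
  by (simp add: plt_def pleq_hemicube inv_orbit_eq_iff)

lemma plt_hemioctahedron:
  "plt hemioctahedron (inv_orbit F) (inv_orbit G) \<longleftrightarrow>
     (cube_le G F \<or> cube_le (cube_inv G) F) \<and> G \<noteq> F \<and> G \<noteq> cube_inv F"
  by (auto simp: plt_def pleq_hemioctahedron inv_orbit_eq_iff)

lemma least_hemicube:
  assumes "is_least hemicube b"
  shows "b = inv_orbit None"
proof -
  obtain F where F: "F \<in> cube_faces" "b = inv_orbit F"
    using assms by (auto simp: is_least_def pfaces_hemicube)
  then have "pleq hemicube (inv_orbit F) (inv_orbit None)"
    using assms by (auto simp: is_least_def pfaces_hemicube)
  moreover have "\<forall>F\<in>cube_faces. pleq hemicube (inv_orbit F) (inv_orbit None) \<longrightarrow> F = None"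
    by (simp add: ball_cube_faces pleq_hemicube)
  ultimately show ?thesis using F by blast
qed

lemma least_hemioctahedron:
  assumes "is_least hemioctahedron b"
  shows "b = inv_orbit (Some (0, 0, 0))"
proof -
  obtain F where F: "F \<in> cube_faces" "b = inv_orbit F"
    using assms by (auto simp: is_least_def pfaces_hemioctahedron)
  then have "pleq hemioctahedron (inv_orbit F) (inv_orbit (Some (0, 0, 0)))"
    using assms by (auto simp: is_least_def pfaces_hemioctahedron)
  moreover have "\<forall>F\<in>cube_faces.
      pleq hemioctahedron (inv_orbit F) (inv_orbit (Some (0, 0, 0))) \<longrightarrow> F = Some (0, 0, 0)"
    by (simp add: ball_cube_faces pleq_hemioctahedron)
  ultimately show ?thesis using F by blast
qed

text \<open>Witnesses that a face of the cube is no atom of the hemicube (resp. hemi-octahedron)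
  unless it is a vertex (resp. a square).\<close>

definition vertex_in :: "cface \<Rightarrow> cface" where
  "vertex_in F = map_option
     (\<lambda>(a, b, c). (if a = 0 then 1 else a, if b = 0 then 1 else b, if c = 0 then 1 else c)) F"

definition square_around :: "cface \<Rightarrow> cface" where
  "square_around F = (case F of None \<Rightarrow> Some (1, 0, 0) | Some (a, b, c) \<Rightarrow>
     if a \<noteq> 0 then Some (a, 0, 0) else if b \<noteq> 0 then Some (0, b, 0) else Some (0, 0, c))"

lemma hemicube_atoms:
  "atoms hemicube (inv_orbit None) =
     inv_orbit ` {Some (1, 1, 1), Some (1, 1, -1), Some (1, -1, 1), Some (-1, 1, 1)}"
    (is "_ = inv_orbit ` ?V")
proof
  show "atoms hemicube (inv_orbit None) \<subseteq> inv_orbit ` ?V"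
  proof
    fix x assume x: "x \<in> atoms hemicube (inv_orbit None)"
    then obtain F where F: "F \<in> cube_faces" "x = inv_orbit F"
      by (auto simp: atoms_def pfaces_hemicube)
    have "\<forall>F\<in>cube_faces. plt hemicube (inv_orbit None) (inv_orbit F) \<longrightarrow> inv_orbit F \<in> inv_orbit ` ?V \<or>
        vertex_in F \<in> cube_faces \<and> plt hemicube (inv_orbit None) (inv_orbit (vertex_in F)) \<and>
        plt hemicube (inv_orbit (vertex_in F)) (inv_orbit F)"
      by (simp add: ball_cube_faces plt_hemicube vertex_in_def inv_orbit_eq_iff)
    moreover have "inv_orbit (vertex_in F) \<in> pfaces hemicube" if "vertex_in F \<in> cube_faces"
      using that by (simp add: pfaces_hemicube)
    ultimately show "x \<in> inv_orbit ` ?V"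
      using F x unfolding atoms_def by blast
  qed
  show "inv_orbit ` ?V \<subseteq> atoms hemicube (inv_orbit None)"
    by (simp add: atoms_def pfaces_hemicube ball_inv_orbit ball_cube_faces plt_hemicube)
qed

lemma hemioctahedron_atoms:
  "atoms hemioctahedron (inv_orbit (Some (0, 0, 0))) =
     inv_orbit ` {Some (1, 0, 0), Some (0, 1, 0), Some (0, 0, 1)}"
    (is "_ = inv_orbit ` ?E")
proof
  show "atoms hemioctahedron (inv_orbit (Some (0, 0, 0))) \<subseteq> inv_orbit ` ?E"
  proof
    fix x assume x: "x \<in> atoms hemioctahedron (inv_orbit (Some (0, 0, 0)))"
    then obtain F where F: "F \<in> cube_faces" "x = inv_orbit F"
      by (auto simp: atoms_def pfaces_hemioctahedron)
    have "\<forall>F\<in>cube_faces. plt hemioctahedron (inv_orbit (Some (0, 0, 0))) (inv_orbit F) \<longrightarrow>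
        inv_orbit F \<in> inv_orbit ` ?E \<or> square_around F \<in> cube_faces \<and>
        plt hemioctahedron (inv_orbit (Some (0, 0, 0))) (inv_orbit (square_around F)) \<and>
        plt hemioctahedron (inv_orbit (square_around F)) (inv_orbit F)"
      by (simp add: ball_cube_faces plt_hemioctahedron square_around_def inv_orbit_eq_iff)
    moreover have "inv_orbit (square_around F) \<in> pfaces hemioctahedron"
      if "square_around F \<in> cube_faces"
      using that by (simp add: pfaces_hemioctahedron)
    ultimately show "x \<in> inv_orbit ` ?E"
      using F x unfolding atoms_def by blast
  qed
  show "inv_orbit ` ?E \<subseteq> atoms hemioctahedron (inv_orbit (Some (0, 0, 0)))"
    by (simp add: atoms_def pfaces_hemioctahedron ball_inv_orbit ball_cube_faces plt_hemioctahedron)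
qed

lemma hemicube_least_atoms:
  assumes "is_least hemicube b"
  shows "card (atoms hemicube b) = 4" and "atoms_pairwise_spanned hemicube b"
proof -
  let ?s = "spans hemicube (inv_orbit None)"
  have "?s (inv_orbit (Some (1, 1, 1))) (inv_orbit (Some (1, 1, -1))) (inv_orbit (Some (1, 1, 0)))"
    "?s (inv_orbit (Some (1, 1, 1))) (inv_orbit (Some (1, -1, 1))) (inv_orbit (Some (1, 0, 1)))"
    "?s (inv_orbit (Some (1, 1, 1))) (inv_orbit (Some (-1, 1, 1))) (inv_orbit (Some (0, 1, 1)))"
    "?s (inv_orbit (Some (1, 1, -1))) (inv_orbit (Some (1, -1, 1))) (inv_orbit (Some (0, 1, -1)))"
    "?s (inv_orbit (Some (1, 1, -1))) (inv_orbit (Some (-1, 1, 1))) (inv_orbit (Some (1, 0, -1)))"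
    "?s (inv_orbit (Some (1, -1, 1))) (inv_orbit (Some (-1, 1, 1))) (inv_orbit (Some (1, -1, 0)))"
    by (simp_all add: spans_def pfaces_hemicube ball_inv_orbit ball_cube_faces plt_hemicube
        inv_orbit_eq_iff imageI)
  then have "atoms_pairwise_spanned hemicube (inv_orbit None)"
    unfolding atoms_pairwise_spanned_def hemicube_atoms by (blast intro: spans_commute)
  then show "card (atoms hemicube b) = 4" "atoms_pairwise_spanned hemicube b"
    using least_hemicube[OF assms] by (simp_all add: hemicube_atoms inv_orbit_eq_iff)
qed

lemma hemioctahedron_least_atoms:
  assumes "is_least hemioctahedron b"
  shows "card (atoms hemioctahedron b) = 3" and "atoms_pairwise_spanned hemioctahedron b"
proof -
  let ?s = "spans hemioctahedron (inv_orbit (Some (0, 0, 0)))"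
  have "?s (inv_orbit (Some (1, 0, 0))) (inv_orbit (Some (0, 1, 0))) (inv_orbit (Some (1, 1, 0)))"
    "?s (inv_orbit (Some (1, 0, 0))) (inv_orbit (Some (0, 0, 1))) (inv_orbit (Some (1, 0, 1)))"
    "?s (inv_orbit (Some (0, 1, 0))) (inv_orbit (Some (0, 0, 1))) (inv_orbit (Some (0, 1, 1)))"
    by (simp_all add: spans_def pfaces_hemioctahedron ball_inv_orbit ball_cube_faces
        plt_hemioctahedron inv_orbit_eq_iff imageI)
  then have "atoms_pairwise_spanned hemioctahedron (inv_orbit (Some (0, 0, 0)))"
    unfolding atoms_pairwise_spanned_def hemioctahedron_atoms by (blast intro: spans_commute)
  then show "card (atoms hemioctahedron b) = 3" "atoms_pairwise_spanned hemioctahedron b"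
    using least_hemioctahedron[OF assms] by (simp_all add: hemioctahedron_atoms inv_orbit_eq_iff)
qed

lemma dual_hemicube: "dual_poset hemicube = hemioctahedron"
  by (simp add: dual_poset_def hemioctahedron_def)

lemma dual_hemioctahedron: "dual_poset hemioctahedron = hemicube"
  by (simp add: dual_poset_def hemioctahedron_def hemicube_def)

section \<open>Graded posets\<close>

locale graded_poset =
  fixes P :: "'a face_poset" and n :: nat
  assumes poset: "is_poset P"
    and flag_finite: "is_flag P \<Phi> \<Longrightarrow> finite \<Phi>"
    and card_flag: "is_flag P \<Phi> \<Longrightarrow> card \<Phi> = n + 2"
begin

lemmas refl = poset_refl[OF poset]
  and antisym = poset_antisym[OF poset]
  and trans = poset_trans[OF poset]

lemma chain_finite_card:
  assumes "is_chain P C"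
  shows "finite C" "card C \<le> n + 2"
proof -
  obtain \<Phi> where "is_flag P \<Phi>" "C \<subseteq> \<Phi>"
    using assms by (rule flag_extends_chain)
  then show "finite C" "card C \<le> n + 2"
    using flag_finite card_flag by (metis finite_subset card_mono)+
qed

lemma chain_is_flag:
  assumes "is_chain P C" "card C = n + 2"
  shows "is_flag P C"
proof -
  obtain \<Phi> where "is_flag P \<Phi>" "C \<subseteq> \<Phi>"
    using assms(1) by (rule flag_extends_chain)
  moreover from this have "C = \<Phi>"
    using card_subset_eq flag_finite card_flag assms(2) by metis
  ultimately show ?thesis by simp
qed

lemma flag_through:
  assumes "x \<in> pfaces P" "y \<in> pfaces P" "z \<in> pfaces P" "pleq P x y" "pleq P y z"
  obtains \<Phi> where "is_flag P \<Phi>" "x \<in> \<Phi>" "y \<in> \<Phi>" "z \<in> \<Phi>"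
proof -
  have "is_chain P {x, y, z}"
    using assms refl trans[of x y z] by (auto simp: is_chain_def)
  then show ?thesis
    using that flag_extends_chain by (metis insert_subset)
qed

lemma flag_through_face:
  assumes "x \<in> pfaces P"
  obtains \<Phi> where "is_flag P \<Phi>" "x \<in> \<Phi>"
proof -
  have "is_chain P {x}"
    using assms refl by (simp add: is_chain_def)
  then show ?thesis
    using that flag_extends_chain by blast
qed

text \<open>The number of faces below x is the same in every flag through x: a flag through x
  with fewer faces below x could be enlarged by those of the other flag.\<close>

lemma card_below_flag_le:
  assumes \<Phi>: "is_flag P \<Phi>" "x \<in> \<Phi>" and \<Psi>: "is_flag P \<Psi>" "x \<in> \<Psi>"
  shows "card {y \<in> \<Phi>. plt P y x} \<le> card {y \<in> \<Psi>. plt P y x}"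
proof -
  let ?B = "{y \<in> \<Phi>. plt P y x}" and ?U = "{y \<in> \<Psi>. \<not> plt P y x}"
  have sub: "\<Phi> \<subseteq> pfaces P" "\<Psi> \<subseteq> pfaces P"
    using \<Phi>(1) \<Psi>(1) by (simp_all add: flag_subset)
  have below: "pleq P a x" if "a \<in> ?B" for a
    using that by (simp add: plt_def)
  have above: "pleq P x u" if "u \<in> ?U" for u
    using that flag_comparable[OF \<Psi>(1) \<Psi>(2), of u] refl[of x] sub \<Psi>(2) by (auto simp: plt_def)
  have "is_chain P (?B \<union> ?U)"
    unfolding is_chain_def
  proof (intro conjI ballI)
    show "?B \<union> ?U \<subseteq> pfaces P" using sub by blast
  next
    have across: "pleq P a u" if "a \<in> ?B" "u \<in> ?U" for a u
      using trans[OF _ _ _ below[OF that(1)] above[OF that(2)]] that sub \<Psi>(2) by blast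
    fix a b assume "a \<in> ?B \<union> ?U" "b \<in> ?B \<union> ?U"
    then consider "a \<in> ?B" "b \<in> ?B" | "a \<in> ?B" "b \<in> ?U" | "a \<in> ?U" "b \<in> ?B" | "a \<in> ?U" "b \<in> ?U"
      by blast
    then show "pleq P a b \<or> pleq P b a"
      by cases (use across flag_comparable[OF \<Phi>(1), of a b] flag_comparable[OF \<Psi>(1), of a b] in auto)
  qed
  then have "card (?B \<union> ?U) \<le> card \<Psi>" "finite ?U"
    using chain_finite_card card_flag[OF \<Psi>(1)] by auto
  moreover have "card \<Psi> = card {y \<in> \<Psi>. plt P y x} + card ?U"
  proof -
    have "\<Psi> = {y \<in> \<Psi>. plt P y x} \<union> ?U" by blast
    then show ?thesis
      using flag_finite[OF \<Psi>(1)] by (metis (no_types, lifting) card_Un_disjoint disjoint_iff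
          finite_Un mem_Collect_eq)
  qed
  moreover have "card (?B \<union> ?U) = card ?B + card ?U"
    using flag_finite[OF \<Phi>(1)] \<open>finite ?U\<close> by (intro card_Un_disjoint) auto
  ultimately show ?thesis by simp
qed

lemma face_rank_flag:
  assumes "is_flag P \<Phi>" "x \<in> \<Phi>"
  shows "face_rank P x = int (card {y \<in> \<Phi>. plt P y x}) - 1"
proof -
  let ?\<Psi> = "SOME \<Psi>. is_flag P \<Psi> \<and> x \<in> \<Psi>"
  have "is_flag P ?\<Psi> \<and> x \<in> ?\<Psi>"
    using someI[of "\<lambda>\<Psi>. is_flag P \<Psi> \<and> x \<in> \<Psi>"] assms by blast
  then have "card {y \<in> ?\<Psi>. plt P y x} = card {y \<in> \<Phi>. plt P y x}"
    using card_below_flag_le[OF assms] card_below_flag_le[OF _ _ assms] by (meson le_antisym)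
  then show ?thesis unfolding face_rank_def by simp
qed

lemma plt_trans:
  "x \<in> pfaces P \<Longrightarrow> y \<in> pfaces P \<Longrightarrow> z \<in> pfaces P \<Longrightarrow> plt P x y \<Longrightarrow> plt P y z \<Longrightarrow> plt P x z"
  using trans antisym unfolding plt_def by metis

lemma flag_through_pair:
  assumes "x \<in> pfaces P" "y \<in> pfaces P" "pleq P x y"
  obtains \<Phi> where "is_flag P \<Phi>" "x \<in> \<Phi>" "y \<in> \<Phi>"
  using flag_through[OF assms(1,1,2) refl[OF assms(1)] assms(3)] by blast

lemma rank_less:
  assumes x: "x \<in> pfaces P" and y: "y \<in> pfaces P" and xy: "plt P x y"
  shows "face_rank P x < face_rank P y"
proof -
  obtain \<Phi> where \<Phi>: "is_flag P \<Phi>" "x \<in> \<Phi>" "y \<in> \<Phi>"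
    using flag_through_pair x y xy by (auto simp: plt_def)
  have "{z \<in> \<Phi>. plt P z x} \<subseteq> {z \<in> \<Phi>. plt P z y}"
    using plt_trans[OF _ x y _ xy] flag_subset[OF \<Phi>(1)] by blast
  moreover have "x \<in> {z \<in> \<Phi>. plt P z y}" "x \<notin> {z \<in> \<Phi>. plt P z x}"
    using \<Phi>(2) xy by (auto simp: plt_def)
  ultimately have "card {z \<in> \<Phi>. plt P z x} < card {z \<in> \<Phi>. plt P z y}"
    using flag_finite[OF \<Phi>(1)] by (intro psubset_card_mono) auto
  then show ?thesis
    using face_rank_flag[OF \<Phi>(1)] \<Phi>(2,3) by simp
qed

lemma flag_le_of_rank_le:
  assumes "is_flag P \<Phi>" "x \<in> \<Phi>" "y \<in> \<Phi>" "face_rank P x \<le> face_rank P y"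
  shows "pleq P x y"
proof (rule ccontr)
  assume "\<not> pleq P x y"
  then have "plt P y x"
    using flag_comparable[OF assms(1-3)] by (auto simp: plt_def)
  then show False
    using rank_less flag_subset[OF assms(1)] assms(2-4) by fastforce
qed

lemma flag_rank_inj:
  assumes "is_flag P \<Phi>" "x \<in> \<Phi>" "y \<in> \<Phi>" "face_rank P x = face_rank P y"
  shows "x = y"
  using antisym flag_le_of_rank_le[OF assms(1-3)] flag_le_of_rank_le[OF assms(1,3,2)]
    flag_subset[OF assms(1)] assms(2-4) by auto

lemma flag_plt_of_rank_less:
  assumes "is_flag P \<Phi>" "x \<in> \<Phi>" "y \<in> \<Phi>" "face_rank P x < face_rank P y"
  shows "plt P x y"
  using flag_le_of_rank_le[OF assms(1-3)] assms(4) by (auto simp: plt_def)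

lemma flag_ranks: "is_flag P \<Phi> \<Longrightarrow> face_rank P ` \<Phi> = {-1..int n}"
proof -
  assume \<Phi>: "is_flag P \<Phi>"
  have "face_rank P x \<in> {-1..int n}" if "x \<in> \<Phi>" for x
  proof -
    have "{y \<in> \<Phi>. plt P y x} \<subseteq> \<Phi> - {x}"
      by (auto simp: plt_def)
    then have "card {y \<in> \<Phi>. plt P y x} \<le> n + 1"
      using card_mono[of "\<Phi> - {x}"] flag_finite[OF \<Phi>] card_flag[OF \<Phi>] that by fastforce
    then show ?thesis
      using face_rank_flag[OF \<Phi> that] by simp
  qed
  moreover have "card (face_rank P ` \<Phi>) = card {-1..int n}"
    using card_image[of "face_rank P" \<Phi>] flag_rank_inj[OF \<Phi>] card_flag[OF \<Phi>]
    by (simp add: inj_on_def)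
  ultimately show ?thesis
    by (intro card_subset_eq) auto
qed

lemma flag_face_of_rank:
  assumes "is_flag P \<Phi>" "-1 \<le> k" "k \<le> int n"
  obtains x where "x \<in> \<Phi>" "face_rank P x = k"
  using flag_ranks[OF assms(1)] assms(2,3) by (metis atLeastAtMost_iff imageE)

lemma rank_bounds: "x \<in> pfaces P \<Longrightarrow> -1 \<le> face_rank P x \<and> face_rank P x \<le> int n"
  using flag_ranks by (metis atLeastAtMost_iff flag_through_face imageI)

lemma extremal_in_flag:
  assumes "is_flag P \<Phi>" "is_least P x \<or> is_greatest P x"
  shows "x \<in> \<Phi>"
proof -
  have "is_chain P (insert x \<Phi>)"
    using assms refl flag_subset[OF assms(1)] flag_comparable[OF assms(1)]
    by (auto simp: is_chain_def is_least_def is_greatest_def)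
  then show ?thesis
    using assms(1) unfolding is_flag_def by blast
qed

lemma rank_least:
  assumes "is_least P b"
  shows "face_rank P b = -1"
proof -
  obtain \<Phi> where \<Phi>: "is_flag P \<Phi>" "b \<in> \<Phi>"
    using assms flag_through_face by (auto simp: is_least_def)
  have "{y \<in> \<Phi>. plt P y b} = {}"
    using assms antisym flag_subset[OF \<Phi>(1)] by (auto simp: is_least_def plt_def)
  then show ?thesis
    using face_rank_flag[OF \<Phi>] by (simp only: card.empty)
qed

lemma rank_greatest:
  assumes "is_greatest P t"
  shows "face_rank P t = int n"
proof -
  obtain \<Phi> where \<Phi>: "is_flag P \<Phi>" "t \<in> \<Phi>"
    using assms flag_through_face by (auto simp: is_greatest_def)
  have "{y \<in> \<Phi>. plt P y t} = \<Phi> - {t}"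
    using assms flag_subset[OF \<Phi>(1)] by (auto simp: is_greatest_def plt_def)
  then show ?thesis
    using face_rank_flag[OF \<Phi>] flag_finite[OF \<Phi>(1)] card_flag[OF \<Phi>(1)] \<Phi>(2) by simp
qed

lemma eq_least_of_rank:
  assumes "is_least P b" "x \<in> pfaces P" "face_rank P x = -1"
  shows "x = b"
proof -
  obtain \<Phi> where \<Phi>: "is_flag P \<Phi>" "x \<in> \<Phi>"
    using assms(2) by (rule flag_through_face)
  moreover have "b \<in> \<Phi>"
    using extremal_in_flag[OF \<Phi>(1)] assms(1) by blast
  ultimately show ?thesis
    using flag_rank_inj rank_least[OF assms(1)] assms(3) by metis
qed

lemma eq_greatest_of_rank:
  assumes "is_greatest P t" "x \<in> pfaces P" "face_rank P x = int n"
  shows "x = t"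
proof -
  obtain \<Phi> where \<Phi>: "is_flag P \<Phi>" "x \<in> \<Phi>"
    using assms(2) by (rule flag_through_face)
  moreover have "t \<in> \<Phi>"
    using extremal_in_flag[OF \<Phi>(1)] assms(1) by blast
  ultimately show ?thesis
    using flag_rank_inj rank_greatest[OF assms(1)] assms(3) by metis
qed

lemma face_between:
  assumes "x \<in> pfaces P" "y \<in> pfaces P" "pleq P x y"
    and "face_rank P x < k" "k < face_rank P y"
  obtains z where "z \<in> pfaces P" "plt P x z" "plt P z y" "face_rank P z = k"
proof -
  obtain \<Phi> where \<Phi>: "is_flag P \<Phi>" "x \<in> \<Phi>" "y \<in> \<Phi>"
    using flag_through_pair assms(1-3) .
  have "-1 \<le> k" "k \<le> int n"
    using rank_bounds[OF assms(1)] rank_bounds[OF assms(2)] assms(4,5) by linarith+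
  then obtain z where z: "z \<in> \<Phi>" "face_rank P z = k"
    using flag_face_of_rank[OF \<Phi>(1)] by blast
  show ?thesis
  proof (rule that)
    show "z \<in> pfaces P" using z flag_subset[OF \<Phi>(1)] by blast
    show "plt P x z" "plt P z y"
      using flag_plt_of_rank_less[OF \<Phi>(1)] \<Phi> z assms(4,5) by simp_all
  qed (rule z(2))
qed

lemma atoms_section:
  assumes x: "x \<in> pfaces P" and y: "y \<in> pfaces P" and "pleq P x y"
  shows "atoms (section_of P x y) x =
    {z \<in> pfaces P. plt P x z \<and> pleq P z y \<and> face_rank P z = face_rank P x + 1}"
proof (intro set_eqI iffI)
  fix z assume "z \<in> atoms (section_of P x y) x"
  then have z: "z \<in> pfaces P" "plt P x z" "pleq P z y"
    and no_between: "\<And>w. w \<in> pfaces P \<Longrightarrow> pleq P w y \<Longrightarrow> plt P x w \<Longrightarrow> \<not> plt P w z"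
    by (auto simp: atoms_def pfaces_section plt_def)
  have "face_rank P z = face_rank P x + 1"
  proof (rule ccontr)
    assume "face_rank P z \<noteq> face_rank P x + 1"
    then have "face_rank P x + 1 < face_rank P z"
      using rank_less[OF x z(1,2)] by linarith
    moreover have "pleq P x z" using z(2) by (simp add: plt_def)
    ultimately obtain w where "w \<in> pfaces P" "plt P x w" "plt P w z"
      using face_between[OF x z(1)] by (metis less_add_one)
    then show False
      using no_between trans[of w z y] y z by (auto simp: plt_def)
  qed
  then show "z \<in> {z \<in> pfaces P. plt P x z \<and> pleq P z y \<and> face_rank P z = face_rank P x + 1}"
    using z by simp
next
  fix z assume "z \<in> {z \<in> pfaces P. plt P x z \<and> pleq P z y \<and> face_rank P z = face_rank P x + 1}"
  then show "z \<in> atoms (section_of P x y) x"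
    using rank_less[OF x] rank_less[of _ z] x
    by (fastforce simp: atoms_def pfaces_section plt_def)
qed

lemma spanned_atoms_common_cover:
  assumes spanned: "atoms_pairwise_spanned (section_of P x y) x"
    and xy: "x \<in> pfaces P" "y \<in> pfaces P" "pleq P x y"
    and a: "a \<in> pfaces P" "plt P x a" "pleq P a y" "face_rank P a = face_rank P x + 1"
    and a': "a' \<in> pfaces P" "plt P x a'" "pleq P a' y" "face_rank P a' = face_rank P x + 1"
    and "a \<noteq> a'"
  obtains c where "c \<in> pfaces P" "plt P a c" "plt P a' c" "face_rank P c = face_rank P x + 2"
proof -
  have "a \<in> atoms (section_of P x y) x" "a' \<in> atoms (section_of P x y) x"
    using atoms_section[OF xy] a a' by simp_all
  then obtain c where c: "spans (section_of P x y) x a a' c"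
    using spanned \<open>a \<noteq> a'\<close> unfolding atoms_pairwise_spanned_def by blast
  then have c_face: "c \<in> pfaces P" "pleq P c y" "plt P a c" "plt P a' c"
    by (simp_all add: spans_def pfaces_section)
  have "face_rank P c = face_rank P x + 2"
  proof (rule ccontr)
    assume "face_rank P c \<noteq> face_rank P x + 2"
    then have "face_rank P a < face_rank P x + 2" "face_rank P x + 2 < face_rank P c"
      using rank_less[OF a(1) c_face(1,3)] a(4) by linarith+
    then obtain z where z: "z \<in> pfaces P" "plt P a z" "plt P z c" "face_rank P z = face_rank P x + 2"
      using face_between[OF a(1) c_face(1)] c_face(3) by (metis plt_def)
    then have "z \<in> pfaces (section_of P x y)"
      using trans[of x a z] trans[of z c y] xy a c_face by (simp add: pfaces_section plt_def)
    then have "z = x \<or> z = a \<or> z = a'"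
      using c z(3) by (simp add: spans_def)
    then show False
      using z(4) a(4) a'(4) by auto
  qed
  with c_face show ?thesis
    using that by blast
qed

lemma adjacent_flags_differ_once:
  assumes A: "is_flag P A" and B: "is_flag P B" and "flags_adjacent A B"
    and "a \<in> A" "b \<in> B" "face_rank P a = face_rank P b" "a \<noteq> b"
  shows "A - {a} \<subseteq> B"
proof -
  have "a \<notin> B"
    using flag_rank_inj[OF B] assms(5-7) by metis
  with \<open>a \<in> A\<close> have "a \<in> A - B" by simp
  moreover obtain p where "A - B = {p}"
    using \<open>flags_adjacent A B\<close> by (auto simp: flags_adjacent_def card_1_singleton_iff)
  ultimately have "A - B = {a}" by simp
  then show ?thesis by blast
qed

lemma flag_exchange:
  assumes \<Phi>: "is_flag P \<Phi>" "lo \<in> \<Phi>" "a \<in> \<Phi>" "hi \<in> \<Phi>"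
    and b: "b \<in> pfaces P" "plt P lo b" "plt P b hi"
    and rank: "face_rank P a = face_rank P lo + 1" "face_rank P hi = face_rank P lo + 2"
    and "a \<noteq> b"
  shows "is_flag P (insert b (\<Phi> - {a}))" and "flags_adjacent \<Phi> (insert b (\<Phi> - {a}))"
proof -
  have faces: "lo \<in> pfaces P" "hi \<in> pfaces P"
    using \<Phi> flag_subset by blast+
  have "face_rank P lo < face_rank P b" "face_rank P b < face_rank P hi"
    using rank_less faces b by blast+
  then have "b \<notin> \<Phi>"
    using flag_rank_inj[OF \<Phi>(1) _ \<Phi>(3)] rank \<open>a \<noteq> b\<close> by fastforce
  have b_comparable: "pleq P z b \<or> pleq P b z" if "z \<in> \<Phi> - {a}" for z
  proof -
    have z: "z \<in> \<Phi>" "face_rank P z \<noteq> face_rank P a" "z \<in> pfaces P"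
      using that flag_rank_inj[OF \<Phi>(1) _ \<Phi>(3)] flag_subset[OF \<Phi>(1)] by auto
    consider "face_rank P z \<le> face_rank P lo" | "face_rank P hi \<le> face_rank P z"
      using z(2) rank by linarith
    then show ?thesis
    proof cases
      case 1
      then have "pleq P z lo" using flag_le_of_rank_le \<Phi> z by blast
      then show ?thesis using trans z(3) faces b by (metis plt_def)
    next
      case 2
      then have "pleq P hi z" using flag_le_of_rank_le \<Phi> z by blast
      then show ?thesis using trans z(3) faces b by (metis plt_def)
    qed
  qed
  have "is_chain P (insert b (\<Phi> - {a}))"
    using b_comparable flag_comparable[OF \<Phi>(1)] flag_subset[OF \<Phi>(1)] b(1) refl[OF b(1)]
    unfolding is_chain_def by auto
  moreover have card: "card (insert b (\<Phi> - {a})) = card \<Phi>"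
    using flag_finite[OF \<Phi>(1)] \<Phi>(3) \<open>b \<notin> \<Phi>\<close> card_Suc_Diff1[of \<Phi> a] by simp
  ultimately show "is_flag P (insert b (\<Phi> - {a}))"
    using chain_is_flag card_flag[OF \<Phi>(1)] by simp
  have "\<Phi> - insert b (\<Phi> - {a}) = {a}"
    using \<Phi>(3) \<open>a \<noteq> b\<close> by auto
  then show "flags_adjacent \<Phi> (insert b (\<Phi> - {a}))"
    using flag_finite[OF \<Phi>(1)] card by (simp add: flags_adjacent_def)
qed

lemma covering_separates_diamond:
  assumes cov: "is_covering P R g"
    and faces: "lo \<in> pfaces P" "a \<in> pfaces P" "b \<in> pfaces P" "hi \<in> pfaces P"
    and order: "plt P lo a" "plt P a hi" "plt P lo b" "plt P b hi"
    and rank: "face_rank P hi = face_rank P lo + 2" and "a \<noteq> b"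
  shows "g a \<noteq> g b"
proof
  assume eq: "g a = g b"
  obtain \<Phi> where \<Phi>: "is_flag P \<Phi>" "lo \<in> \<Phi>" "a \<in> \<Phi>" "hi \<in> \<Phi>"
    using flag_through[OF faces(1,2,4)] order(1,2) by (auto simp: plt_def)
  have "face_rank P lo < face_rank P a" "face_rank P a < face_rank P hi"
    using rank_less faces order by blast+
  then have "face_rank P a = face_rank P lo + 1"
    using rank by linarith
  then have "flags_adjacent (g ` \<Phi>) (g ` insert b (\<Phi> - {a}))"
    using covering_flags_adjacent[OF cov \<Phi>(1)] flag_exchange[OF \<Phi> faces(3) order(3,4) _ rank \<open>a \<noteq> b\<close>]
    by blast
  moreover have "g ` insert b (\<Phi> - {a}) = g ` insert a (\<Phi> - {a})"
    by (simp only: image_insert eq)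
  then have "g ` insert b (\<Phi> - {a}) = g ` \<Phi>"
    using \<Phi>(3) by (simp add: insert_absorb)
  ultimately show False
    by (simp add: flags_adjacent_def)
qed

lemma graded_poset_dual: "graded_poset (dual_poset P) n"
proof
  show "is_poset (dual_poset P)"
    using poset by (rule is_poset_dual)
qed (simp_all add: flag_finite card_flag)

lemma rank_dual:
  assumes x: "x \<in> pfaces P"
  shows "face_rank (dual_poset P) x = int n - 1 - face_rank P x"
proof -
  obtain \<Phi> where \<Phi>: "is_flag P \<Phi>" "x \<in> \<Phi>"
    using x by (rule flag_through_face)
  let ?B = "{y \<in> \<Phi>. plt P y x}" and ?U = "{y \<in> \<Phi>. plt P x y}"
  have "\<not> (plt P y x \<and> plt P x y)" if "y \<in> \<Phi>" for y
    using antisym[of x y] x that flag_subset[OF \<Phi>(1)] by (auto simp: plt_def)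
  then have disjoint: "?B \<inter> insert x ?U = {}"
    by (auto simp: plt_def)
  have partition: "\<Phi> = ?B \<union> insert x ?U"
    using flag_comparable[OF \<Phi>(1) \<Phi>(2)] \<Phi>(2) by (auto simp: plt_def)
  have finite: "finite ?B" "finite (insert x ?U)" and "x \<notin> ?U"
    using flag_finite[OF \<Phi>(1)] by (simp_all add: plt_def)
  have "card \<Phi> = card ?B + card (insert x ?U)"
    unfolding partition[symmetric] using card_Un_disjoint[OF finite disjoint] partition by simp
  also have "card (insert x ?U) = Suc (card ?U)"
    using finite \<open>x \<notin> ?U\<close> by simp
  finally have "card \<Phi> = card ?B + Suc (card ?U)" .
  moreover have "face_rank (dual_poset P) x = int (card {y \<in> \<Phi>. plt (dual_poset P) y x}) - 1"
    using graded_poset.face_rank_flag[OF graded_poset_dual] \<Phi> is_flag_dual by blast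
  moreover have "face_rank P x = int (card ?B) - 1"
    using face_rank_flag[OF \<Phi>] .
  ultimately show ?thesis
    using card_flag[OF \<Phi>(1)] by simp
qed

lemma covering_dual:
  assumes R: "graded_poset R n" and cov: "is_covering P R g"
  shows "is_covering (dual_poset P) (dual_poset R) g"
proof -
  have "face_rank (dual_poset R) (g x) = face_rank (dual_poset P) x" if "x \<in> pfaces P" for x
  proof -
    have "g x \<in> pfaces R" "face_rank R (g x) = face_rank P x"
      using cov that by (auto simp: is_covering_def)
    then show ?thesis
      using rank_dual[OF that] graded_poset.rank_dual[OF R] by simp
  qed
  then show ?thesis
    using cov unfolding is_covering_def by simp
qed

end

lemma polytope_graded: "is_polytope P n \<Longrightarrow> graded_poset P n"
  by unfold_locales (simp_all add: is_polytope_def)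


lemma polytope_dual:
  assumes P: "is_polytope P n"
  shows "is_polytope (dual_poset P) n"
proof -
  interpret graded_poset P n
    using P by (rule polytope_graded)
  have "diamond_condition (dual_poset P)"
    unfolding diamond_condition_def
  proof (intro ballI impI)
    fix x y assume "x \<in> pfaces (dual_poset P)" "y \<in> pfaces (dual_poset P)"
      and "plt (dual_poset P) x y \<and> face_rank (dual_poset P) y = face_rank (dual_poset P) x + 2"
    then have "x \<in> pfaces P" "y \<in> pfaces P" "plt P y x \<and> face_rank P x = face_rank P y + 2"
      using rank_dual[of x] rank_dual[of y] by simp_all
    then have "card {z \<in> pfaces P. plt P y z \<and> plt P z x} = 2"
      using P unfolding is_polytope_def diamond_condition_def by blast
    moreover have "{z \<in> pfaces (dual_poset P). plt (dual_poset P) x z \<and> plt (dual_poset P) z y} =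
        {z \<in> pfaces P. plt P y z \<and> plt P z x}"
      by auto
    ultimately show "card {z \<in> pfaces (dual_poset P). plt (dual_poset P) x z \<and> plt (dual_poset P) z y} = 2"
      by simp
  qed
  moreover have "strongly_flag_connected (dual_poset P)"
    using P by (simp add: is_polytope_def strongly_flag_connected_def)
  moreover have "is_poset (dual_poset P)"
    using poset by (rule is_poset_dual)
  ultimately show ?thesis
    using P by (simp add: is_polytope_def)
qed

section \<open>Polytopes of type hemicube over hemi-octahedron\<close>

definition vertices_of :: "'a face_poset \<Rightarrow> 'a \<Rightarrow> 'a set" where
  "vertices_of P F = {v \<in> pfaces P. face_rank P v = 0 \<and> pleq P v F}"

definition edges_at :: "'a face_poset \<Rightarrow> 'a \<Rightarrow> 'a set" where
  "edges_at P v = {e \<in> pfaces P. face_rank P e = 1 \<and> pleq P v e}"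

definition joined_by_edge :: "'a face_poset \<Rightarrow> 'a \<Rightarrow> 'a \<Rightarrow> bool" where
  "joined_by_edge P v w \<longleftrightarrow> (\<exists>e\<in>edges_at P v. w \<in> vertices_of P e)"

lemma (in graded_poset) adjacent_flags_vertices_joined:
  assumes "1 \<le> n" and A: "is_flag P A" and B: "is_flag P B" and "flags_adjacent A B"
    and u: "u \<in> A" "face_rank P u = 0" and x: "x \<in> B" "face_rank P x = 0" and "u \<noteq> x"
  shows "joined_by_edge P u x"
proof -
  obtain e where e: "e \<in> A" "face_rank P e = 1"
    using flag_face_of_rank[OF A, of 1] assms(1) by auto
  have "e \<in> B"
    using adjacent_flags_differ_once[OF A B \<open>flags_adjacent A B\<close> u(1) x(1)] u(2) x(2) \<open>u \<noteq> x\<close> e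
    by auto
  have faces: "u \<in> pfaces P" "x \<in> pfaces P" "e \<in> pfaces P"
    using flag_subset[OF A] flag_subset[OF B] u(1) x(1) e(1) by auto
  have "pleq P u e" "pleq P x e"
    using flag_le_of_rank_le[OF A u(1) e(1)] flag_le_of_rank_le[OF B x(1) \<open>e \<in> B\<close>] u(2) x(2) e(2)
    by simp_all
  then show ?thesis
    using faces e(2) x(2) by (auto simp: joined_by_edge_def edges_at_def vertices_of_def)
qed

lemma card_vertices_of_edge:
  assumes P: "is_polytope P n" and e: "e \<in> pfaces P" "face_rank P e = 1"
  shows "card (vertices_of P e) = 2"
proof -
  interpret graded_poset P n
    using P by (rule polytope_graded)
  obtain b where b: "is_least P b"
    using P by (auto simp: is_polytope_def)
  have b_rank: "face_rank P b = -1" and b_face: "b \<in> pfaces P"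
    using rank_least b by (simp_all add: is_least_def)
  have "plt P b e"
    using b e b_rank by (auto simp: plt_def is_least_def)
  moreover have "diamond_condition P"
    using P by (simp add: is_polytope_def)
  ultimately have "card {z \<in> pfaces P. plt P b z \<and> plt P z e} = 2"
    using b_face e b_rank unfolding diamond_condition_def by simp
  moreover have "{z \<in> pfaces P. plt P b z \<and> plt P z e} = vertices_of P e"
  proof (intro set_eqI iffI)
    fix z assume "z \<in> {z \<in> pfaces P. plt P b z \<and> plt P z e}"
    then have z: "z \<in> pfaces P" "plt P b z" "plt P z e"
      by simp_all
    then have "face_rank P z = 0"
      using rank_less[OF b_face z(1,2)] rank_less[OF z(1) e(1) z(3)] b_rank e(2) by linarith
    with z show "z \<in> vertices_of P e"
      by (simp add: vertices_of_def plt_def)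
  next
    fix z assume "z \<in> vertices_of P e"
    then show "z \<in> {z \<in> pfaces P. plt P b z \<and> plt P z e}"
      using b b_rank e by (auto simp: vertices_of_def plt_def is_least_def)
  qed
  ultimately show ?thesis by simp
qed

text \<open>The consequences of having hemicubes as facets and hemi-octahedra as vertex figures that
  the argument uses. The type is self-dual, so the dual polytope satisfies them as well.\<close>

locale hemicubic_polytope =
  fixes P :: "'a face_poset" and Fmin Fmax :: 'a
  assumes polytope: "is_polytope P 4"
    and least: "is_least P Fmin" and greatest: "is_greatest P Fmax"
    and facet_atoms: "F \<in> pfaces P \<Longrightarrow> face_rank P F = 3 \<Longrightarrow>
      4 \<le> card (atoms (section_of P Fmin F) Fmin) \<and> atoms_pairwise_spanned (section_of P Fmin F) Fmin"
    and vertex_figure_atoms: "v \<in> pfaces P \<Longrightarrow> face_rank P v = 0 \<Longrightarrow>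
      finite (atoms (section_of P v Fmax) v) \<and> card (atoms (section_of P v Fmax) v) \<le> 3 \<and>
      atoms_pairwise_spanned (section_of P v Fmax) v"
begin

sublocale graded_poset P 4
  using polytope by (rule polytope_graded)

lemma Fmin_face: "Fmin \<in> pfaces P" and Fmax_face: "Fmax \<in> pfaces P"
  using least greatest by (simp_all add: is_least_def is_greatest_def)

lemma rank_Fmin: "face_rank P Fmin = -1"
  using rank_least[OF least] .

lemma plt_Fmin: "x \<in> pfaces P \<Longrightarrow> 0 \<le> face_rank P x \<Longrightarrow> plt P Fmin x"
  using least rank_Fmin by (auto simp: is_least_def plt_def)

lemma le_Fmax: "x \<in> pfaces P \<Longrightarrow> pleq P x Fmax"
  using greatest by (simp add: is_greatest_def)

lemma facet_atoms_eq:
  assumes "F \<in> pfaces P" "face_rank P F = 3"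
  shows "atoms (section_of P Fmin F) Fmin = vertices_of P F"
proof -
  have "pleq P Fmin F"
    using least assms by (simp add: is_least_def)
  then have "atoms (section_of P Fmin F) Fmin =
      {z \<in> pfaces P. plt P Fmin z \<and> pleq P z F \<and> face_rank P z = 0}"
    using atoms_section[OF Fmin_face assms(1)] rank_Fmin by simp
  also have "\<dots> = vertices_of P F"
    using plt_Fmin by (auto simp: vertices_of_def)
  finally show ?thesis .
qed

lemma vertex_figure_atoms_eq:
  assumes "v \<in> pfaces P" "face_rank P v = 0"
  shows "atoms (section_of P v Fmax) v = edges_at P v"
proof -
  have "atoms (section_of P v Fmax) v =
      {z \<in> pfaces P. plt P v z \<and> pleq P z Fmax \<and> face_rank P z = 1}"
    using atoms_section[OF assms(1) Fmax_face le_Fmax[OF assms(1)]] assms(2) by simp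
  also have "\<dots> = edges_at P v"
    using assms(2) le_Fmax by (auto simp: edges_at_def plt_def)
  finally show ?thesis .
qed

lemma four_le_card_facet_vertices:
  "F \<in> pfaces P \<Longrightarrow> face_rank P F = 3 \<Longrightarrow> 4 \<le> card (vertices_of P F)"
  using facet_atoms facet_atoms_eq by simp

lemma card_edges_at:
  "v \<in> pfaces P \<Longrightarrow> face_rank P v = 0 \<Longrightarrow> finite (edges_at P v) \<and> card (edges_at P v) \<le> 3"
  using vertex_figure_atoms vertex_figure_atoms_eq by simp

lemma facet_vertices_joined:
  assumes F: "F \<in> pfaces P" "face_rank P F = 3"
    and vw: "v \<in> vertices_of P F" "w \<in> vertices_of P F" "v \<noteq> w"
  shows "joined_by_edge P v w"
proof -
  have spanned: "atoms_pairwise_spanned (section_of P Fmin F) Fmin"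
    using facet_atoms[OF F] by simp
  have "pleq P Fmin F"
    using least F by (simp add: is_least_def)
  moreover have v: "v \<in> pfaces P" "plt P Fmin v" "pleq P v F" "face_rank P v = face_rank P Fmin + 1"
    and w: "w \<in> pfaces P" "plt P Fmin w" "pleq P w F" "face_rank P w = face_rank P Fmin + 1"
    using vw plt_Fmin rank_Fmin by (auto simp: vertices_of_def)
  ultimately obtain e where "e \<in> pfaces P" "plt P v e" "plt P w e" "face_rank P e = 1"
    using spanned_atoms_common_cover[OF spanned Fmin_face F(1) _ v w vw(3)] rank_Fmin by auto
  then show ?thesis
    using vw by (auto simp: joined_by_edge_def edges_at_def vertices_of_def plt_def)
qed

lemma edges_at_joined:
  assumes v: "v \<in> pfaces P" "face_rank P v = 0"
    and ee': "e \<in> edges_at P v" "e' \<in> edges_at P v" "e \<noteq> e'"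
  obtains c where "c \<in> pfaces P" "plt P e c" "plt P e' c" "face_rank P c = 2"
proof -
  have spanned: "atoms_pairwise_spanned (section_of P v Fmax) v"
    using vertex_figure_atoms[OF v] by simp
  have e: "e \<in> pfaces P" "plt P v e" "pleq P e Fmax" "face_rank P e = face_rank P v + 1"
    and e': "e' \<in> pfaces P" "plt P v e'" "pleq P e' Fmax" "face_rank P e' = face_rank P v + 1"
    using ee' v le_Fmax by (auto simp: edges_at_def plt_def)
  show ?thesis
    using spanned_atoms_common_cover[OF spanned v(1) Fmax_face le_Fmax[OF v(1)] e e' ee'(3)] v(2) that
    by auto
qed

lemma card_vertex_neighbourhood:
  assumes v: "v \<in> pfaces P" "face_rank P v = 0"
  shows "finite (insert v {w. joined_by_edge P v w})" and "card (insert v {w. joined_by_edge P v w}) \<le> 4"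
proof -
  define X where "X = (\<Union>e\<in>edges_at P v. vertices_of P e - {v})"
  have card_other_end: "card (vertices_of P e - {v}) = 1" if "e \<in> edges_at P v" for e
  proof -
    have "v \<in> vertices_of P e" "card (vertices_of P e) = 2"
      using that v card_vertices_of_edge[OF polytope] by (auto simp: edges_at_def vertices_of_def)
    then show ?thesis
      by (simp add: card_Diff_singleton_if)
  qed
  have edges: "finite (edges_at P v)" "card (edges_at P v) \<le> 3"
    using card_edges_at[OF v] by simp_all
  have "finite X"
    unfolding X_def using edges(1) card_other_end by (metis card.infinite finite_UN_I zero_neq_one)
  moreover have "card X \<le> 3"
    using card_UN_le[OF edges(1), of "\<lambda>e. vertices_of P e - {v}"] card_other_end edges(2)
    unfolding X_def by simp
  ultimately have fin: "finite (insert v X)" and card: "card (insert v X) \<le> 4"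
    using card_insert_le_m1[of 4 X v] by simp_all
  have sub: "insert v {w. joined_by_edge P v w} \<subseteq> insert v X"
    by (auto simp: joined_by_edge_def X_def)
  show "finite (insert v {w. joined_by_edge P v w})"
    using finite_subset[OF sub fin] .
  show "card (insert v {w. joined_by_edge P v w}) \<le> 4"
    using card_mono[OF fin sub] card by linarith
qed

text \<open>A facet has at least four vertices, all joined to v, while v has at most three
  neighbours: so the facets through v contain exactly v and its neighbours.\<close>

lemma facet_vertices_eq_neighbourhood:
  assumes F: "F \<in> pfaces P" "face_rank P F = 3" and v: "v \<in> vertices_of P F"
  shows "vertices_of P F = insert v {w. joined_by_edge P v w}"
proof -
  have v_face: "v \<in> pfaces P" "face_rank P v = 0"
    using v by (simp_all add: vertices_of_def)
  note fin = card_vertex_neighbourhood[OF v_face]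
  have sub: "vertices_of P F \<subseteq> insert v {w. joined_by_edge P v w}"
    using facet_vertices_joined[OF F v] by blast
  moreover have "card (vertices_of P F) = card (insert v {w. joined_by_edge P v w})"
    using card_mono[OF fin(1) sub] fin(2) four_le_card_facet_vertices[OF F] by linarith
  ultimately show ?thesis
    using card_subset_eq[OF fin(1)] by blast
qed

lemma vertex_below_facet:
  assumes v: "v \<in> pfaces P" "face_rank P v = 0" and F: "F \<in> pfaces P" "face_rank P F = 3"
  shows "v \<in> vertices_of P F"
proof -
  let ?Q = "\<lambda>\<Lambda>. \<forall>x\<in>\<Lambda>. face_rank P x = 0 \<longrightarrow> x \<in> vertices_of P F"
  obtain \<Phi>0 where \<Phi>0: "is_flag P \<Phi>0" "F \<in> \<Phi>0"
    using F(1) by (rule flag_through_face)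
  have base: "?Q \<Phi>0"
    using flag_le_of_rank_le[OF \<Phi>0(1) _ \<Phi>0(2)] F(2) flag_subset[OF \<Phi>0(1)]
    by (auto simp: vertices_of_def)
  have step: "?Q B" if A: "is_flag P A" and B: "is_flag P B" and "flags_adjacent A B" "?Q A"
    for A B
  proof (intro ballI impI)
    fix x assume x: "x \<in> B" "face_rank P x = 0"
    obtain u where u: "u \<in> A" "face_rank P u = 0"
      using flag_face_of_rank[OF A, of 0] by auto
    then have "u \<in> vertices_of P F"
      using \<open>?Q A\<close> by blast
    moreover have "x = u \<or> joined_by_edge P u x"
      using adjacent_flags_vertices_joined[OF _ A B \<open>flags_adjacent A B\<close> u x] by auto
    ultimately show "x \<in> vertices_of P F"
      using facet_vertices_eq_neighbourhood[OF F] by blast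
  qed
  have connected: "strongly_flag_connected P"
    using polytope by (simp add: is_polytope_def)
  obtain \<Phi> where \<Phi>: "is_flag P \<Phi>" "v \<in> \<Phi>"
    using v(1) by (rule flag_through_face)
  have "?Q \<Phi>"
    by (rule flag_connected_induct[where Q = ?Q, OF connected \<Phi>0(1) \<Phi>(1) base step])
  then show ?thesis
    using \<Phi>(2) v(2) by blast
qed

lemma vertices_joined:
  assumes v: "v \<in> pfaces P" "face_rank P v = 0" and w: "w \<in> pfaces P" "face_rank P w = 0"
    and "v \<noteq> w"
  shows "joined_by_edge P v w"
proof -
  obtain \<Phi> where \<Phi>: "is_flag P \<Phi>" "Fmin \<in> \<Phi>"
    using Fmin_face by (rule flag_through_face)
  then obtain F where "F \<in> \<Phi>" and F_rank: "face_rank P F = 3"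
    using flag_face_of_rank[OF \<Phi>(1), of 3] by auto
  then have F_face: "F \<in> pfaces P"
    using flag_subset[OF \<Phi>(1)] by blast
  show ?thesis
    using facet_vertices_joined[OF F_face F_rank] vertex_below_facet[OF v F_face F_rank]
      vertex_below_facet[OF w F_face F_rank] \<open>v \<noteq> w\<close>
    by blast
qed

lemma covering_inj_on_vertices:
  assumes cov: "is_covering P R g"
    and v: "v \<in> pfaces P" "face_rank P v = 0" and w: "w \<in> pfaces P" "face_rank P w = 0"
    and "g v = g w"
  shows "v = w"
proof (rule ccontr)
  assume "v \<noteq> w"
  then obtain e where e: "e \<in> pfaces P" "face_rank P e = 1" "pleq P v e" "pleq P w e"
    using vertices_joined[OF v w] by (auto simp: joined_by_edge_def edges_at_def vertices_of_def)
  have "plt P v e" "plt P w e"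
    using e v(2) w(2) by (auto simp: plt_def)
  then have "g v \<noteq> g w"
    using covering_separates_diamond[OF cov Fmin_face v(1) w(1) e(1)] plt_Fmin v w e(2) rank_Fmin
      \<open>v \<noteq> w\<close> by simp
  then show False
    using \<open>g v = g w\<close> by simp
qed

lemma identified_edges_share_vertex:
  assumes R: "is_polytope R 4" and cov: "is_covering P R g"
    and e: "e \<in> pfaces P" "face_rank P e = 1" and e': "e' \<in> pfaces P" "face_rank P e' = 1"
    and "g e = g e'"
  obtains u where "u \<in> vertices_of P e" "u \<in> vertices_of P e'"
proof -
  let ?V = "vertices_of P e \<union> vertices_of P e'"
  have "g z \<in> vertices_of R (g e)" if "z \<in> ?V" for z
  proof -
    have z: "z \<in> pfaces P" "face_rank P z = 0" "pleq P z e \<or> pleq P z e'"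
      using that by (auto simp: vertices_of_def)
    then have "pleq R (g z) (g e)"
      using covering_mono[OF cov z(1) e(1)] covering_mono[OF cov z(1) e'(1)] \<open>g e = g e'\<close>
      by auto
    then show ?thesis
      using covering_face[OF cov z(1)] z(2) by (simp add: vertices_of_def)
  qed
  then have sub: "g ` ?V \<subseteq> vertices_of R (g e)"
    by blast
  have "card (vertices_of R (g e)) = 2"
    using card_vertices_of_edge[OF R] covering_face[OF cov e(1)] e(2) by simp
  then have "card (g ` ?V) \<le> 2"
    using card_mono[OF _ sub] by (simp add: card_ge_0_finite)
  moreover have "inj_on g ?V"
    using covering_inj_on_vertices[OF cov] by (auto simp: inj_on_def vertices_of_def)
  moreover have "card (vertices_of P e) = 2" "card (vertices_of P e') = 2"
    using card_vertices_of_edge[OF polytope] e e' by simp_all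
  ultimately have "vertices_of P e \<inter> vertices_of P e' \<noteq> {}"
    by (auto simp: card_image card_Un_disjoint card_ge_0_finite)
  with that show ?thesis by blast
qed

lemma covering_inj_on_edges:
  assumes R: "is_polytope R 4" and cov: "is_covering P R g"
    and e: "e \<in> pfaces P" "face_rank P e = 1" and e': "e' \<in> pfaces P" "face_rank P e' = 1"
    and "g e = g e'"
  shows "e = e'"
proof (rule ccontr)
  assume "e \<noteq> e'"
  obtain u where "u \<in> vertices_of P e" "u \<in> vertices_of P e'"
    using identified_edges_share_vertex[OF assms] .
  then have u: "u \<in> pfaces P" "face_rank P u = 0" "plt P u e" "plt P u e'"
    and ee': "e \<in> edges_at P u" "e' \<in> edges_at P u"
    using e e' by (auto simp: vertices_of_def edges_at_def plt_def)
  obtain c where c: "c \<in> pfaces P" "plt P e c" "plt P e' c" "face_rank P c = 2"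
    by (rule edges_at_joined[OF u(1,2) ee' \<open>e \<noteq> e'\<close>])
  have "g e \<noteq> g e'"
    using covering_separates_diamond[OF cov u(1) e(1) e'(1) c(1) u(3) c(2) u(4) c(3)]
      u(2) c(4) \<open>e \<noteq> e'\<close> by simp
  then show False
    using \<open>g e = g e'\<close> by simp
qed

end

lemma facets_iso_dual:
  assumes "is_polytope P n" and "vertex_figures_iso P L"
  shows "facets_iso (dual_poset P) n (dual_poset L)"
  unfolding facets_iso_def
proof (intro allI impI)
  interpret graded_poset P n
    using assms(1) by (rule polytope_graded)
  fix x y assume "is_least (dual_poset P) x \<and> y \<in> pfaces (dual_poset P) \<and>
    face_rank (dual_poset P) y = int n - 1"
  then have "y \<in> pfaces P" "face_rank P y = 0" "is_greatest P x"
    using rank_dual by auto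
  then have "poset_iso (section_of P y x) L"
    using assms(2) by (simp add: vertex_figures_iso_def)
  then show "poset_iso (section_of (dual_poset P) x y) (dual_poset L)"
    by (simp add: section_of_dual poset_iso_dual)
qed

lemma vertex_figures_iso_dual:
  assumes "is_polytope P n" and "facets_iso P n K"
  shows "vertex_figures_iso (dual_poset P) (dual_poset K)"
  unfolding vertex_figures_iso_def
proof (intro allI impI)
  interpret graded_poset P n
    using assms(1) by (rule polytope_graded)
  fix x y assume "x \<in> pfaces (dual_poset P) \<and> face_rank (dual_poset P) x = 0 \<and>
    is_greatest (dual_poset P) y"
  then have "x \<in> pfaces P" "face_rank P x = int n - 1" "is_least P y"
    using rank_dual by auto
  then have "poset_iso (section_of P y x) K"
    using assms(2) by (simp add: facets_iso_def)
  then show "poset_iso (section_of (dual_poset P) x y) (dual_poset K)"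
    by (simp add: section_of_dual poset_iso_dual)
qed

lemma hemicubic_polytopeI:
  assumes P: "is_polytope P 4" and facets: "facets_iso P 4 hemicube"
    and vertex_figures: "vertex_figures_iso P hemioctahedron"
    and Fmin: "is_least P Fmin" and Fmax: "is_greatest P Fmax"
  shows "hemicubic_polytope P Fmin Fmax"
proof
  have poset: "is_poset P"
    using P by (simp add: is_polytope_def)
  fix F assume F: "F \<in> pfaces P" "face_rank P F = 3"
  have iso: "poset_iso (section_of P Fmin F) hemicube"
    using facets[unfolded facets_iso_def, rule_format, of Fmin F] Fmin F by simp
  have "Fmin \<in> pfaces P" "pleq P Fmin F"
    using Fmin F by (simp_all add: is_least_def)
  then have "is_least (section_of P Fmin F) Fmin"
    by (rule is_least_section[OF poset])
  then obtain b where "is_least hemicube b"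
    and "card (atoms (section_of P Fmin F) Fmin) = card (atoms hemicube b)"
    and "atoms_pairwise_spanned hemicube b \<Longrightarrow> atoms_pairwise_spanned (section_of P Fmin F) Fmin"
    by (rule poset_iso_least_atoms[OF iso]) blast
  then show "4 \<le> card (atoms (section_of P Fmin F) Fmin) \<and>
      atoms_pairwise_spanned (section_of P Fmin F) Fmin"
    using hemicube_least_atoms by simp
next
  have poset: "is_poset P"
    using P by (simp add: is_polytope_def)
  fix v assume v: "v \<in> pfaces P" "face_rank P v = 0"
  have iso: "poset_iso (section_of P v Fmax) hemioctahedron"
    using vertex_figures[unfolded vertex_figures_iso_def, rule_format, of v Fmax] Fmax v by simp
  have "pleq P v Fmax"
    using Fmax v by (simp add: is_greatest_def)
  then have "is_least (section_of P v Fmax) v"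
    by (rule is_least_section[OF poset v(1)])
  then obtain b where "is_least hemioctahedron b"
    and "card (atoms (section_of P v Fmax) v) = card (atoms hemioctahedron b)"
    and "atoms_pairwise_spanned hemioctahedron b \<Longrightarrow> atoms_pairwise_spanned (section_of P v Fmax) v"
    by (rule poset_iso_least_atoms[OF iso]) blast
  then show "finite (atoms (section_of P v Fmax) v) \<and> card (atoms (section_of P v Fmax) v) \<le> 3 \<and>
      atoms_pairwise_spanned (section_of P v Fmax) v"
    using hemioctahedron_least_atoms by (simp add: card_ge_0_finite)
qed (fact P Fmin Fmax)+

lemma hemicubic_polytope_dual:
  assumes P: "is_polytope P 4" and "facets_iso P 4 hemicube" "vertex_figures_iso P hemioctahedron"
    and "is_least P Fmin" "is_greatest P Fmax"
  shows "hemicubic_polytope (dual_poset P) Fmax Fmin"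
  using hemicubic_polytopeI[OF polytope_dual[OF P]] facets_iso_dual[OF P assms(3)]
    vertex_figures_iso_dual[OF P assms(2)] assms(4,5)
  by (simp add: dual_hemicube dual_hemioctahedron)

lemma covering_inj_on_faces:
  assumes P: "hemicubic_polytope P Fmin Fmax" and P': "hemicubic_polytope (dual_poset P) Fmax Fmin"
    and R: "is_polytope R 4" and cov: "is_covering P R g"
  shows "inj_on g (pfaces P)"
proof (rule inj_onI)
  interpret hemicubic_polytope P Fmin Fmax by (fact P)
  interpret dual: hemicubic_polytope "dual_poset P" Fmax Fmin by (fact P')
  have cov': "is_covering (dual_poset P) (dual_poset R) g"
    using covering_dual polytope_graded[OF R] cov by blast
  have R': "is_polytope (dual_poset R) 4"
    using R by (rule polytope_dual)
  fix x y assume x: "x \<in> pfaces P" and y: "y \<in> pfaces P" and "g x = g y"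
  then have rank: "face_rank P x = face_rank P y"
    using covering_face[OF cov] by metis
  have dual_rank: "face_rank (dual_poset P) x = 3 - face_rank P x"
    "face_rank (dual_poset P) y = 3 - face_rank P y"
    using rank_dual x y by simp_all
  consider "face_rank P x = -1" | "face_rank P x = 0" | "face_rank P x = 1" | "face_rank P x = 2"
    | "face_rank P x = 3" | "face_rank P x = 4"
    using rank_bounds[OF x] by linarith
  then show "x = y"
  proof cases
    case 1
    then show ?thesis using eq_least_of_rank[OF least] x y rank by metis
  next
    case 2
    then show ?thesis using covering_inj_on_vertices[OF cov x _ y] rank \<open>g x = g y\<close> by simp
  next
    case 3
    then show ?thesis using covering_inj_on_edges[OF R cov x _ y] rank \<open>g x = g y\<close> by simp
  next
    case 4
    then show ?thesis
      using dual.covering_inj_on_edges[OF R' cov'] x y dual_rank rank \<open>g x = g y\<close> by simp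
  next
    case 5
    then show ?thesis
      using dual.covering_inj_on_vertices[OF cov'] x y dual_rank rank \<open>g x = g y\<close> by simp
  next
    case 6
    then show ?thesis using eq_greatest_of_rank[OF greatest] x y rank by (metis of_nat_numeral)
  qed
qed

theorem corollary3p2:
  fixes Q :: "'a face_poset" and R :: "'b face_poset" and g :: "'a \<Rightarrow> 'b"
  assumes "is_universal_KL Q hemicube hemioctahedron"
    and "is_polytope R 4"
    and "is_covering Q R g"
  shows "poset_iso Q R"
proof -
  have Q: "is_polytope Q 4" "facets_iso Q 4 hemicube" "vertex_figures_iso Q hemioctahedron"
    using assms(1) by (simp_all add: is_universal_KL_def)
  obtain Fmin Fmax where Fmin: "is_least Q Fmin" and Fmax: "is_greatest Q Fmax"
    using Q(1) by (auto simp: is_polytope_def)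
  have "hemicubic_polytope Q Fmin Fmax"
    by (rule hemicubic_polytopeI[OF Q Fmin Fmax])
  moreover have "hemicubic_polytope (dual_poset Q) Fmax Fmin"
    by (rule hemicubic_polytope_dual[OF Q Fmin Fmax])
  ultimately have "inj_on g (pfaces Q)"
    using assms(2,3) by (rule covering_inj_on_faces)
  moreover have "is_poset Q" "is_poset R"
    using Q(1) assms(2) by (simp_all add: is_polytope_def)
  ultimately show ?thesis
    using injective_covering_poset_iso assms(3) by blast
qed

end
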